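(* Let $T$ be a measure-preserving map on the probability space $(X,\mathcal{A},\mu)$, $(A_l)$ a sequence of asymptotically rare events, $(\nu_l)$ a sequence in $\mathfrak{P}$, and $\tau_l:X\to\mathbb{N}_0$, $l\ge1$, measurable functions. a) $(\tau_l)$ is an admissible delay sequence for the variables $R_l:=\mu(A_l)\Phi_{A_l}:X\to[0,\infty]^{\mathbb{N}_0}$ and the measures $\nu_l$ provided that $\mu(A_l)\tau_l\to0$ in $\nu_l$-probability and $\nu_l(\tau_l<\varphi_{A_l})\to1$ as $l\to\infty$. b) The condition $\nu_l(\tau_l<\varphi_{A_l})\to1$ alone suffices for $(\tau_l)$ to be an admissible delay sequence for the variables $R_l:=\mu(A_l)\Phi_{A_l}\circ T_{A_l}:X\to[0,\infty]^{\mathbb{N}}$ and the $\nu_l$.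
   Context: For $A$ with $\mu(A)>0$: $\varphi_A(x):=\inf\{n\ge1:T^nx\in A\}$, $T_Ax:=T^{\varphi_A(x)}x$, $\Phi_A:=(\varphi_A,\varphi_A\circ T_A,\ldots)$; $[0,\infty]$ metrized by $|e^{-s}-e^{-t}|$, sequence spaces with the product metric $\sum_j2^{-(j+1)}d(s^{(j)},t^{(j)})$. Asymptotically rare: $0<\mu(A_l)\to0$. $\mathfrak{P}$: probabilities $\nu\ll\mu$. $T^\tau x:=T^{\tau(x)}x$. For Borel maps $R_l$ into a compact metric space $\mathfrak{E}$ and probabilities $\nu_l$, $(\tau_l)$ is an admissible delay sequence for $(R_l)$ and $(\nu_l)$ if $D_{\mathfrak{E}}(\nu_l\circ R_l^{-1},\nu_l\circ(R_l\circ T^{\tau_l})^{-1})\to0$, where $D_{\mathfrak{E}}(Q,Q')=\sum_{j\ge1}2^{-(j+1)}|\int\chi_j\,dQ-\int\chi_j\,dQ'|$ for a fixed sequence of Lipschitz $\chi_j$, $|\chi_j|\le1$, obtained by normalizing a dense sequence in $\mathcal{C}(\mathfrak{E})$ (a metric for weak convergence). *)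

theory Defs
  imports "HOL-Probability.Probability"
begin

definition hit :: "('a \<Rightarrow> 'a) \<Rightarrow> 'a set \<Rightarrow> 'a \<Rightarrow> enat" where
  "hit T A x = (if \<exists>n\<ge>1. (T ^^ n) x \<in> A
                then enat (LEAST n. n \<ge> 1 \<and> (T ^^ n) x \<in> A) else \<infinity>)"

definition retmap :: "('a \<Rightarrow> 'a) \<Rightarrow> 'a set \<Rightarrow> 'a \<Rightarrow> 'a" where
  "retmap T A x = (case hit T A x of enat n \<Rightarrow> (T ^^ n) x | \<infinity> \<Rightarrow> x)"

definition Phi :: "('a \<Rightarrow> 'a) \<Rightarrow> 'a set \<Rightarrow> 'a \<Rightarrow> nat \<Rightarrow> enat" where
  "Phi T A x j = hit T A ((retmap T A ^^ j) x)"

definition eneg :: "ennreal \<Rightarrow> real" where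
  "eneg s = (if s = \<infinity> then 0 else exp (- enn2real s))"

definition seq_dist :: "(nat \<Rightarrow> ennreal) \<Rightarrow> (nat \<Rightarrow> ennreal) \<Rightarrow> real" where
  "seq_dist s t = (\<Sum>j. (1/2) ^ (j + 1) * \<bar>eneg (s j) - eneg (t j)\<bar>)"

definition seq_continuous :: "((nat \<Rightarrow> ennreal) \<Rightarrow> real) \<Rightarrow> bool" where
  "seq_continuous f \<longleftrightarrow>
     (\<forall>s. \<forall>e>0. \<exists>d>0. \<forall>t. seq_dist s t < d \<longrightarrow> \<bar>f s - f t\<bar> < e)"

definition seq_lipschitz :: "((nat \<Rightarrow> ennreal) \<Rightarrow> real) \<Rightarrow> bool" where
  "seq_lipschitz f \<longleftrightarrow> (\<exists>L. \<forall>s t. \<bar>f s - f t\<bar> \<le> L * seq_dist s t)"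

definition chi_system :: "(nat \<Rightarrow> (nat \<Rightarrow> ennreal) \<Rightarrow> real) \<Rightarrow> bool" where
  "chi_system chi \<longleftrightarrow>
     (\<exists>g. (\<forall>j. seq_continuous (g j)) \<and>
          (\<forall>f. seq_continuous f \<longrightarrow> (\<forall>e>0. \<exists>j. \<forall>s. \<bar>f s - g j s\<bar> < e)) \<and>
          (\<forall>j s. chi j s = g j s / (SUP t. \<bar>g j t\<bar>))) \<and>
     (\<forall>j. seq_lipschitz (chi j) \<and> (\<forall>s. \<bar>chi j s\<bar> \<le> 1))"

text \<open>D_E(nu o R^-1, nu o R'^-1), integrals against image measures written as integrals over nu.\<close>
definition DE :: "(nat \<Rightarrow> (nat \<Rightarrow> ennreal) \<Rightarrow> real) \<Rightarrow> 'a measure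
                  \<Rightarrow> ('a \<Rightarrow> nat \<Rightarrow> ennreal) \<Rightarrow> ('a \<Rightarrow> nat \<Rightarrow> ennreal) \<Rightarrow> real" where
  "DE chi \<nu> R R' = (\<Sum>j. (1/2) ^ (j + 1) *
       \<bar>(\<integral>x. chi j (R x) \<partial>\<nu>) - (\<integral>x. chi j (R' x) \<partial>\<nu>)\<bar>)"

definition admissible_delay ::
  "('a \<Rightarrow> 'a) \<Rightarrow> (nat \<Rightarrow> (nat \<Rightarrow> ennreal) \<Rightarrow> real) \<Rightarrow> (nat \<Rightarrow> 'a \<Rightarrow> nat \<Rightarrow> ennreal)
     \<Rightarrow> (nat \<Rightarrow> 'a measure) \<Rightarrow> (nat \<Rightarrow> 'a \<Rightarrow> nat) \<Rightarrow> bool" where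
  "admissible_delay T chi R \<nu> \<tau> \<longleftrightarrow>
     (\<lambda>l. DE chi (\<nu> l) (R l) (\<lambda>x. R l ((T ^^ \<tau> l x) x))) \<longlonglongrightarrow> 0"

definition measure_preserving_map :: "'a measure \<Rightarrow> ('a \<Rightarrow> 'a) \<Rightarrow> bool" where
  "measure_preserving_map M T \<longleftrightarrow> T \<in> measurable M M \<and> distr M M T = M"

definition asymp_rare :: "'a measure \<Rightarrow> (nat \<Rightarrow> 'a set) \<Rightarrow> bool" where
  "asymp_rare M A \<longleftrightarrow> (\<forall>l. A l \<in> sets M \<and> 0 < measure M (A l)) \<and>
                       (\<lambda>l. measure M (A l)) \<longlonglongrightarrow> 0"

definition Pfrak :: "'a measure \<Rightarrow> 'a measure set" where
  "Pfrak M = {\<nu>. prob_space \<nu> \<and> sets \<nu> = sets M \<and> absolutely_continuous M \<nu>}"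

end

theory Submission
  imports Defs
begin

(* If \<tau>(x) < \<phi>_A(x), the orbits of x and of T^\<tau> x enter A at the same moment, so
   \<phi>_A(T^\<tau> x) = \<phi>_A(x) - \<tau>(x) and T_A(T^\<tau> x) = T_A x.  Hence \<mu>(A)\<Phi>_A and
   \<mu>(A)\<Phi>_A \<circ> T^\<tau> differ only in coordinate 0, where t \<mapsto> e^-t moves by at most
   \<mu>(A)\<tau>, while \<mu>(A)\<Phi>_A \<circ> T_A does not change at all.  As every \<chi>_j is Lipschitz
   and bounded by 1, \<chi>_j \<circ> R_l - \<chi>_j \<circ> R_l \<circ> T^\<tau>_l tends to 0 in \<nu>_l-probability;
   so the integrals of \<chi>_j converge together, and Tannery's theorem passes this to the
   weighted series D. *)

lemma hit_eq_enat_iff: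
  "hit T A x = enat h \<longleftrightarrow>
     1 \<le> h \<and> (T ^^ h) x \<in> A \<and> (\<forall>m. 1 \<le> m \<and> m < h \<longrightarrow> (T ^^ m) x \<notin> A)"
proof
  assume "hit T A x = enat h"
  then have ex: "\<exists>n\<ge>1. (T ^^ n) x \<in> A" and h: "h = (LEAST n. n \<ge> 1 \<and> (T ^^ n) x \<in> A)"
    unfolding hit_def by (auto split: if_splits)
  from ex have "h \<ge> 1 \<and> (T ^^ h) x \<in> A"
    unfolding h by (metis (mono_tags, lifting) LeastI)
  moreover have "\<forall>m. 1 \<le> m \<and> m < h \<longrightarrow> (T ^^ m) x \<notin> A"
    using not_less_Least h by blast
  ultimately show "1 \<le> h \<and> (T ^^ h) x \<in> A \<and> (\<forall>m. 1 \<le> m \<and> m < h \<longrightarrow> (T ^^ m) x \<notin> A)"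
    by blast
next
  assume H: "1 \<le> h \<and> (T ^^ h) x \<in> A \<and> (\<forall>m. 1 \<le> m \<and> m < h \<longrightarrow> (T ^^ m) x \<notin> A)"
  have "(LEAST n. n \<ge> 1 \<and> (T ^^ n) x \<in> A) = h"
    by (rule Least_equality) (use H in \<open>auto simp: not_less[symmetric]\<close>)
  with H show "hit T A x = enat h" unfolding hit_def by auto
qed

lemma hit_eq_infinity_iff: "hit T A x = \<infinity> \<longleftrightarrow> (\<forall>n\<ge>1. (T ^^ n) x \<notin> A)"
  unfolding hit_def by auto

lemma Phi_Suc: "Phi T A x (Suc j) = Phi T A (retmap T A x) j"
  unfolding Phi_def by (simp add: funpow_Suc_right del: funpow.simps)

lemma Phi_of_hit_infinity:
  assumes "hit T A x = \<infinity>"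
  shows "Phi T A x j = \<infinity>"
proof -
  have "(retmap T A ^^ j) x = x"
    using assms by (induction j) (auto simp: retmap_def)
  then show ?thesis using assms by (simp add: Phi_def)
qed

lemma hit_funpow_before_hit:
  assumes "enat k < hit T A x"
  shows "hit T A ((T ^^ k) x) = hit T A x - enat k"
proof (cases "hit T A x")
  case (enat h)
  then have "1 \<le> h" "(T ^^ h) x \<in> A" "\<And>m. 1 \<le> m \<Longrightarrow> m < h \<Longrightarrow> (T ^^ m) x \<notin> A"
    by (simp_all add: hit_eq_enat_iff)
  moreover have "k < h" using assms enat by simp
  ultimately have "hit T A ((T ^^ k) x) = enat (h - k)"
    unfolding hit_eq_enat_iff by (auto simp: funpow_add[symmetric, THEN fun_cong, simplified])
  then show ?thesis using enat by simp
next
  case infinity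
  then have "hit T A ((T ^^ k) x) = \<infinity>"
    unfolding hit_eq_infinity_iff
    by (metis add.commute comp_apply funpow_add le_add2 order_trans)
  then show ?thesis using infinity by simp
qed

lemma Phi_retmap_funpow_before_hit:
  assumes "enat k < hit T A x"
  shows "Phi T A (retmap T A ((T ^^ k) x)) = Phi T A (retmap T A x)"
proof (cases "hit T A x")
  case (enat h)
  with assms have "retmap T A ((T ^^ k) x) = retmap T A x"
    by (auto simp: retmap_def hit_funpow_before_hit funpow_add[symmetric, THEN fun_cong, simplified])
  then show ?thesis by simp
next
  case infinity
  then have "hit T A ((T ^^ k) x) = \<infinity>" using assms by (simp add: hit_funpow_before_hit)
  with infinity show ?thesis by (auto simp: retmap_def Phi_of_hit_infinity)
qed

lemma measurable_funpow: "T \<in> measurable M M \<Longrightarrow> T ^^ n \<in> measurable M M"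
  by (induction n) (auto intro: measurable_comp)

lemma measurable_funpow_at:
  assumes "T \<in> measurable M M" and "t \<in> measurable M (count_space UNIV)"
  shows "(\<lambda>x. (T ^^ t x) x) \<in> measurable M M"
  by (rule measurable_compose_countable[OF _ assms(2)])
    (rule measurable_funpow[OF assms(1), unfolded comp_def])

lemma measurable_hit:
  assumes T: "T \<in> measurable M M" and A: "A \<in> sets M"
  shows "hit T A \<in> measurable M (count_space UNIV)"
proof (subst measurable_count_space_eq2_countable, intro conjI ballI)
  show "hit T A \<in> space M \<rightarrow> UNIV" by simp
  have visit: "{x \<in> space M. (T ^^ n) x \<in> A} \<in> sets M" for n
    using measurable_sets[OF measurable_funpow[OF T] A] by (simp add: vimage_def Int_def conj_commute)
  fix a :: enat
  show "hit T A -` {a} \<inter> space M \<in> sets M"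
  proof (cases a)
    case (enat h)
    have "hit T A -` {a} \<inter> space M =
        (if 1 \<le> h then {x \<in> space M. (T ^^ h) x \<in> A} \<inter>
           (\<Inter>m\<in>{1..<h}. space M - {x \<in> space M. (T ^^ m) x \<in> A}) else {})"
      unfolding enat using hit_eq_enat_iff[of T A _ h] by auto
    then show ?thesis using visit by auto
  next
    case infinity
    have "hit T A -` {a} \<inter> space M =
        space M \<inter> (\<Inter>m\<in>{1..}. space M - {x \<in> space M. (T ^^ m) x \<in> A})"
      unfolding infinity using hit_eq_infinity_iff[of T A] by auto
    then show ?thesis using visit by auto
  qed
qed

lemma measurable_retmap:
  assumes T: "T \<in> measurable M M" and A: "A \<in> sets M"
  shows "retmap T A \<in> measurable M M"
proof -
  have "(\<lambda>x. (\<lambda>i x. case i of enat n \<Rightarrow> (T ^^ n) x | \<infinity> \<Rightarrow> x) (hit T A x) x) \<in> measurable M M"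
  proof (rule measurable_compose_countable[OF _ measurable_hit[OF T A]])
    fix i :: enat
    show "(\<lambda>x. case i of enat n \<Rightarrow> (T ^^ n) x | \<infinity> \<Rightarrow> x) \<in> measurable M M"
      by (cases i) (auto simp: measurable_funpow[OF T, unfolded comp_def])
  qed
  then show ?thesis unfolding retmap_def[abs_def] by simp
qed

lemma measurable_Phi:
  assumes T: "T \<in> measurable M M" and A: "A \<in> sets M"
  shows "(\<lambda>x. Phi T A x j) \<in> measurable M (count_space UNIV)"
  unfolding Phi_def
  using measurable_comp[OF measurable_funpow[OF measurable_retmap[OF T A]] measurable_hit[OF T A]]
  by (simp add: comp_def)

lemma measurable_truncated_seq:
  fixes P :: "'a \<Rightarrow> nat \<Rightarrow> 'b :: countable"
  assumes "\<And>j. (\<lambda>x. P x j) \<in> measurable M (count_space UNIV)"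
  shows "(\<lambda>x. h (\<lambda>j. if j < n then P x j else c) :: real) \<in> borel_measurable M"
proof (induction n arbitrary: h)
  case (Suc n)
  have "(\<lambda>x. h (\<lambda>j. if j < Suc n then P x j else c)) =
        (\<lambda>x. (\<lambda>i x. h ((\<lambda>j. if j < n then P x j else c)(n := i))) (P x n) x)"
    by (auto intro!: ext arg_cong[where f=h] simp: less_Suc_eq)
  then show ?case
    using measurable_compose_countable[OF Suc.IH assms] by simp
qed simp

lemma abs_eneg_diff_le_one: "\<bar>eneg s - eneg t\<bar> \<le> 1"
proof -
  have "0 \<le> eneg u \<and> eneg u \<le> 1" for u
    unfolding eneg_def by auto
  from this[of s] this[of t] show ?thesis
    unfolding abs_le_iff by linarith
qed

lemma summable_seq_dist_terms:
  "summable (\<lambda>j. (1/2::real) ^ (j + 1) * \<bar>eneg (s j) - eneg (t j)\<bar>)"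
proof (rule summable_comparison_test[where g="\<lambda>j. (1/2::real) ^ (j + 1)"])
  show "\<exists>N. \<forall>n\<ge>N. norm ((1/2::real) ^ (n + 1) * \<bar>eneg (s n) - eneg (t n)\<bar>) \<le> (1/2) ^ (n + 1)"
    by (auto simp: abs_mult intro!: mult_left_le_one_le abs_eneg_diff_le_one)
  show "summable (\<lambda>j. (1/2::real) ^ (j + 1))"
    using power_half_series sums_summable by simp
qed

lemma seq_dist_nonneg: "0 \<le> seq_dist s t"
  unfolding seq_dist_def by (rule suminf_nonneg[OF summable_seq_dist_terms]) simp

lemma seq_dist_le_if_eq_below:
  assumes "\<And>j. j < n \<Longrightarrow> s j = t j"
  shows "seq_dist s t \<le> (1/2) ^ n"
proof -
  let ?f = "\<lambda>j. (1/2::real) ^ (j + 1) * \<bar>eneg (s j) - eneg (t j)\<bar>"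
  have "seq_dist s t = (\<Sum>j. ?f (j + n)) + sum ?f {..<n}"
    unfolding seq_dist_def by (rule suminf_split_initial_segment[OF summable_seq_dist_terms])
  also have "sum ?f {..<n} = 0" using assms by simp
  also have "(\<Sum>j. ?f (j + n)) \<le> (\<Sum>j. (1/2) ^ n * (1/2::real) ^ (j + 1))"
  proof (rule suminf_le)
    show "?f (j + n) \<le> (1/2) ^ n * (1/2::real) ^ (j + 1)" for j
      using abs_eneg_diff_le_one by (auto simp: power_add intro!: mult_left_le_one_le)
    show "summable (\<lambda>j. ?f (j + n))"
      by (subst summable_iff_shift) (rule summable_seq_dist_terms)
    show "summable (\<lambda>j. (1/2) ^ n * (1/2::real) ^ (j + 1))"
      using power_half_series sums_summable summable_mult by simp
  qed
  also have "(\<Sum>j. (1/2) ^ n * (1/2::real) ^ (j + 1)) = (1/2) ^ n"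
    using sums_unique[OF sums_mult[OF power_half_series, of "(1/2)^n"]] by simp
  finally show ?thesis by simp
qed

lemma seq_dist_if_eq_tail:
  assumes "\<And>j. s (Suc j) = t (Suc j)"
  shows "seq_dist s t = \<bar>eneg (s 0) - eneg (t 0)\<bar> / 2"
proof -
  let ?f = "\<lambda>j. (1/2::real) ^ (j + 1) * \<bar>eneg (s j) - eneg (t j)\<bar>"
  have "?f = (\<lambda>j. if j = 0 then ?f 0 else 0)"
  proof
    show "?f j = (if j = 0 then ?f 0 else 0)" for j
      using assms by (cases j) simp_all
  qed
  then have "?f sums ?f 0"
    using sums_single[of 0 "\<lambda>_. ?f 0"] by metis
  then show ?thesis unfolding seq_dist_def by (simp add: sums_iff)
qed

lemma seq_lipschitzE:
  assumes "seq_lipschitz c"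
  obtains L where "0 \<le> L" "\<And>s t. \<bar>c s - c t\<bar> \<le> L * seq_dist s t"
proof -
  obtain L where L: "\<And>s t. \<bar>c s - c t\<bar> \<le> L * seq_dist s t"
    using assms unfolding seq_lipschitz_def by blast
  have "\<bar>c s - c t\<bar> \<le> max L 0 * seq_dist s t" for s t
    using order_trans[OF L mult_right_mono[OF max.cobounded1 seq_dist_nonneg]] .
  then show ?thesis using that[of "max L 0"] by simp
qed

lemma abs_exp_minus_diff_le:
  fixes a b :: real
  assumes "0 \<le> a" "a \<le> b"
  shows "\<bar>exp (- a) - exp (- b)\<bar> \<le> b - a"
proof -
  define q where "q = exp (- (b - a))"
  have diff: "exp (- a) - exp (- b) = exp (- a) * (1 - q)"
    unfolding q_def by (simp add: algebra_simps flip: exp_add)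
  have lower: "1 - (b - a) \<le> q"
    unfolding q_def using exp_ge_add_one_self[of "a - b"] by (simp add: algebra_simps)
  have "q \<le> 1"
    unfolding q_def using assms by simp
  then have "0 \<le> exp (- a) * (1 - q)" and "exp (- a) * (1 - q) \<le> 1 - q"
    using assms by (auto intro: mult_left_le_one_le)
  with diff lower show ?thesis by linarith
qed

lemma eneg_scaled_diff_le:
  fixes h :: enat and a :: real
  assumes a: "0 \<le> a" and k: "enat k < h"
  shows "\<bar>eneg (ennreal a * ennreal_of_enat h) - eneg (ennreal a * ennreal_of_enat (h - enat k))\<bar>
           \<le> a * k"
proof (cases h)
  case (enat n)
  have eneg_enat: "eneg (ennreal a * of_nat m) = exp (- (a * m))" for m
    using a by (simp add: eneg_def ennreal_of_nat_eq_real_of_nat ennreal_mult[symmetric])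
  have "k < n" using k enat by simp
  then have "\<bar>exp (- (a * real (n - k))) - exp (- (a * n))\<bar> \<le> a * n - a * real (n - k)"
    using a by (intro abs_exp_minus_diff_le) (auto intro: mult_left_mono)
  with \<open>k < n\<close> show ?thesis
    using enat by (simp add: eneg_enat abs_minus_commute of_nat_diff algebra_simps)
qed (use assms in simp)

lemma pred_countable_rel:
  fixes f :: "'a \<Rightarrow> 'b :: countable"
  assumes "f \<in> measurable M (count_space UNIV)" and "g \<in> measurable M (count_space UNIV)"
  shows "Measurable.pred M (\<lambda>x. Q (f x) (g x))"
proof -
  have "(\<lambda>x. (\<lambda>i x. Q i (g x)) (f x) x) \<in> measurable M (count_space UNIV)"
    by (rule measurable_compose_countable[OF _ assms(1)]) (rule measurable_compose[OF assms(2)], simp)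
  then show ?thesis by simp
qed

(* No topology on nat \<Rightarrow> ennreal is needed: a Lipschitz function of the sequence is the
   pointwise limit of its values on truncations, and those take only countably many values. *)
lemma measurable_seq_lipschitz_comp:
  fixes P :: "'a \<Rightarrow> nat \<Rightarrow> 'b :: countable" and g :: "'b \<Rightarrow> ennreal"
  assumes c: "seq_lipschitz c" and P: "\<And>j. (\<lambda>x. P x j) \<in> measurable M (count_space UNIV)"
  shows "(\<lambda>x. c (\<lambda>j. g (P x j))) \<in> borel_measurable M"
proof (rule borel_measurable_LIMSEQ_real)
  let ?u = "\<lambda>n x. c (\<lambda>j. g (if j < n then P x j else undefined))"
  show "?u n \<in> borel_measurable M" for n
    using measurable_truncated_seq[OF P, where h="\<lambda>e. c (\<lambda>j. g (e j))"] by simp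
  obtain L where "0 \<le> L" and L: "\<And>s t. \<bar>c s - c t\<bar> \<le> L * seq_dist s t"
    using seq_lipschitzE[OF c] by blast
  fix x
  have "(\<lambda>n. ?u n x - c (\<lambda>j. g (P x j))) \<longlonglongrightarrow> 0"
  proof (rule Lim_null_comparison)
    have "norm (?u n x - c (\<lambda>j. g (P x j)))
        \<le> L * seq_dist (\<lambda>j. g (if j < n then P x j else undefined)) (\<lambda>j. g (P x j))" for n
      using L by simp
    also have "\<dots> n \<le> L * (1/2) ^ n" for n
      using \<open>0 \<le> L\<close> by (intro mult_left_mono seq_dist_le_if_eq_below) simp_all
    finally show "\<forall>\<^sub>F n in sequentially. norm (?u n x - c (\<lambda>j. g (P x j))) \<le> L * (1/2) ^ n"
      by simp
    show "(\<lambda>n. L * (1/2::real) ^ n) \<longlonglongrightarrow> 0"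
      by (intro tendsto_mult_right_zero LIMSEQ_power_zero) simp
  qed
  then show "(\<lambda>n. ?u n x) \<longlonglongrightarrow> c (\<lambda>j. g (P x j))"
    by (simp add: LIM_zero_iff)
qed

lemma seq_dist_scaled_Phi_funpow_le:
  assumes "0 \<le> a" and before: "enat k < hit T A x"
  shows "seq_dist (\<lambda>j. ennreal a * ennreal_of_enat (Phi T A x j))
                  (\<lambda>j. ennreal a * ennreal_of_enat (Phi T A ((T ^^ k) x) j)) \<le> a * k / 2"
proof -
  have "seq_dist (\<lambda>j. ennreal a * ennreal_of_enat (Phi T A x j))
                 (\<lambda>j. ennreal a * ennreal_of_enat (Phi T A ((T ^^ k) x) j))
      = \<bar>eneg (ennreal a * ennreal_of_enat (hit T A x))
         - eneg (ennreal a * ennreal_of_enat (hit T A x - enat k))\<bar> / 2"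
    by (subst seq_dist_if_eq_tail)
      (simp_all add: Phi_Suc Phi_retmap_funpow_before_hit[OF before],
       simp add: Phi_def hit_funpow_before_hit[OF before])
  also have "\<dots> \<le> a * k / 2"
    using eneg_scaled_diff_le[OF assms] by simp
  finally show ?thesis .
qed

lemma abs_integral_diff_le:
  fixes f g :: "'a \<Rightarrow> real"
  assumes "prob_space N"
    and [measurable]: "f \<in> borel_measurable N" "g \<in> borel_measurable N"
    and f: "\<And>x. \<bar>f x\<bar> \<le> 1" and g: "\<And>x. \<bar>g x\<bar> \<le> 1" and "0 \<le> c"
  shows "\<bar>(\<integral>x. f x \<partial>N) - (\<integral>x. g x \<partial>N)\<bar>
           \<le> 2 * measure N {x \<in> space N. c < \<bar>f x - g x\<bar>} + c"
proof -
  interpret prob_space N by fact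
  let ?B = "{x \<in> space N. c < \<bar>f x - g x\<bar>}"
  have B: "?B \<in> sets N" by measurable
  have fi: "integrable N f" and gi: "integrable N g"
    using f g by (auto intro: integrable_const_bound[where B=1])
  have "\<bar>(\<integral>x. f x \<partial>N) - (\<integral>x. g x \<partial>N)\<bar> = \<bar>\<integral>x. f x - g x \<partial>N\<bar>"
    using fi gi by simp
  also have "\<dots> \<le> (\<integral>x. \<bar>f x - g x\<bar> \<partial>N)" by (rule integral_abs_bound)
  also have "\<dots> \<le> (\<integral>x. 2 * indicator ?B x + c \<partial>N)"
  proof (rule integral_mono)
    show "\<bar>f x - g x\<bar> \<le> 2 * indicator ?B x + c" if "x \<in> space N" for x
      using that f[of x] g[of x] \<open>0 \<le> c\<close> by (cases "x \<in> ?B") (auto simp: abs_le_iff)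
  qed (use fi gi B in \<open>auto simp: less_top[symmetric]\<close>)
  also have "\<dots> = 2 * prob ?B + c"
    using B by (simp add: integral_add less_top[symmetric] prob_space)
  finally show ?thesis .
qed

lemma weighted_series_tendsto_zero:
  fixes a :: "nat \<Rightarrow> nat \<Rightarrow> real"
  assumes "\<And>l j. \<bar>a l j\<bar> \<le> 2" and "\<And>j. (\<lambda>l. a l j) \<longlonglongrightarrow> 0"
  shows "(\<lambda>l. \<Sum>j. (1/2) ^ (j + 1) * \<bar>a l j\<bar>) \<longlonglongrightarrow> 0"
proof -
  have "(\<lambda>l. \<Sum>j. (1/2) ^ (j + 1) * \<bar>a l j\<bar>) \<longlonglongrightarrow> (\<Sum>j. (0::real))"
  proof (rule tannerys_theorem[where M="\<lambda>j. 2 * (1/2::real) ^ (j + 1)", THEN conjunct2, THEN conjunct2])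
    show "(\<lambda>l. (1/2) ^ (j + 1) * \<bar>a l j\<bar>) \<longlonglongrightarrow> 0" for j
      using tendsto_mult_right_zero[OF tendsto_rabs_zero[OF assms(2)[of j]]] by simp
    show "\<forall>\<^sub>F (j, l) in sequentially \<times>\<^sub>F sequentially.
            norm ((1/2::real) ^ (j + 1) * \<bar>a l j\<bar>) \<le> 2 * (1/2) ^ (j + 1)"
      using assms(1) by (intro always_eventually) (auto simp: mult.commute intro!: mult_right_mono)
    show "summable (\<lambda>j. 2 * (1/2::real) ^ (j + 1))"
      using power_half_series sums_summable summable_mult by simp
  qed simp
  then show ?thesis by simp
qed

lemma DE_tendsto_zero:
  assumes \<nu>: "\<And>l. prob_space (\<nu> l)" and chi: "\<And>j s. \<bar>chi j s\<bar> \<le> 1"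
    and R: "\<And>l j. (\<lambda>x. chi j (R l x)) \<in> borel_measurable (\<nu> l)"
    and R': "\<And>l j. (\<lambda>x. chi j (R' l x)) \<in> borel_measurable (\<nu> l)"
    and in_prob: "\<And>j \<epsilon>. 0 < \<epsilon> \<Longrightarrow>
      (\<lambda>l. measure (\<nu> l) {x \<in> space (\<nu> l). \<epsilon> < \<bar>chi j (R l x) - chi j (R' l x)\<bar>}) \<longlonglongrightarrow> 0"
  shows "(\<lambda>l. DE chi (\<nu> l) (R l) (R' l)) \<longlonglongrightarrow> 0"
  unfolding DE_def
proof (rule weighted_series_tendsto_zero)
  fix l j
  have "\<bar>chi j u - chi j v\<bar> \<le> 2" for u v
    using abs_triangle_ineq4[of "chi j u" "chi j v"] chi[of j u] chi[of j v] by linarith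
  then have empty: "{x \<in> space (\<nu> l). 2 < \<bar>chi j (R l x) - chi j (R' l x)\<bar>} = {}"
    using leD by blast
  have "\<bar>(\<integral>x. chi j (R l x) \<partial>\<nu> l) - (\<integral>x. chi j (R' l x) \<partial>\<nu> l)\<bar>
      \<le> 2 * measure (\<nu> l) {x \<in> space (\<nu> l). 2 < \<bar>chi j (R l x) - chi j (R' l x)\<bar>} + 2"
    by (rule abs_integral_diff_le[OF \<nu> R R' chi chi]) simp
  then show "\<bar>(\<integral>x. chi j (R l x) \<partial>\<nu> l) - (\<integral>x. chi j (R' l x) \<partial>\<nu> l)\<bar> \<le> 2"
    unfolding empty by simp
next
  fix j
  show "(\<lambda>l. (\<integral>x. chi j (R l x) \<partial>\<nu> l) - (\<integral>x. chi j (R' l x) \<partial>\<nu> l)) \<longlonglongrightarrow> 0"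
  proof (rule tendstoI)
    fix \<epsilon> :: real assume "0 < \<epsilon>"
    then have "\<forall>\<^sub>F l in sequentially.
        measure (\<nu> l) {x \<in> space (\<nu> l). \<epsilon> / 2 < \<bar>chi j (R l x) - chi j (R' l x)\<bar>} < \<epsilon> / 4"
      by (intro order_tendstoD(2)[OF in_prob]) simp_all
    then show "\<forall>\<^sub>F l in sequentially.
        dist ((\<integral>x. chi j (R l x) \<partial>\<nu> l) - (\<integral>x. chi j (R' l x) \<partial>\<nu> l)) 0 < \<epsilon>"
    proof eventually_elim
      case (elim l)
      have "\<bar>(\<integral>x. chi j (R l x) \<partial>\<nu> l) - (\<integral>x. chi j (R' l x) \<partial>\<nu> l)\<bar>
          \<le> 2 * measure (\<nu> l) {x \<in> space (\<nu> l). \<epsilon> / 2 < \<bar>chi j (R l x) - chi j (R' l x)\<bar>} + \<epsilon> / 2"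
        using \<open>0 < \<epsilon>\<close> by (intro abs_integral_diff_le[OF \<nu> R R' chi chi]) simp
      with elim show ?case by (simp add: dist_real_def)
    qed
  qed
qed

lemma tendsto_measure_zero_if_subset_Un:
  assumes "\<And>l. finite_measure (N l)" and "\<And>l. B l \<in> sets (N l)" and "\<And>l. C l \<in> sets (N l)"
    and "\<And>l. S l \<subseteq> B l \<union> C l"
    and "(\<lambda>l. measure (N l) (B l)) \<longlonglongrightarrow> 0" and "(\<lambda>l. measure (N l) (C l)) \<longlonglongrightarrow> 0"
  shows "(\<lambda>l. measure (N l) (S l)) \<longlonglongrightarrow> 0"
proof (rule tendsto_sandwich[where f="\<lambda>_. 0" and h="\<lambda>l. measure (N l) (B l) + measure (N l) (C l)"])
  have "measure (N l) (S l) \<le> measure (N l) (B l \<union> C l)" for l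
    using assms(1-4) by (intro finite_measure.finite_measure_mono) auto
  then show "\<forall>\<^sub>F l in sequentially. measure (N l) (S l) \<le> measure (N l) (B l) + measure (N l) (C l)"
    using assms(2,3) by (intro always_eventually allI order_trans[OF _ measure_Un_le])
  show "(\<lambda>l. measure (N l) (B l) + measure (N l) (C l)) \<longlonglongrightarrow> 0"
    using tendsto_add[OF assms(5,6)] by simp
qed simp_all

lemma sets_delay_before_hit:
  assumes "T \<in> measurable M M" and "A \<in> sets M" and "\<tau> \<in> measurable M (count_space UNIV)"
  shows "{x \<in> space M. enat (\<tau> x) < hit T A x} \<in> sets M"
  using pred_countable_rel[OF assms(3) measurable_hit[OF assms(1,2)], of "\<lambda>k h. enat k < h"]
  by (simp add: pred_def)

lemma measure_delay_not_before_hit_tendsto_zero: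
  assumes "\<And>l. prob_space (\<nu> l)" and "\<And>l. T \<in> measurable (\<nu> l) (\<nu> l)"
    and "\<And>l. A l \<in> sets (\<nu> l)" and "\<And>l. \<tau> l \<in> measurable (\<nu> l) (count_space UNIV)"
    and "(\<lambda>l. measure (\<nu> l) {x \<in> space (\<nu> l). enat (\<tau> l x) < hit T (A l) x}) \<longlonglongrightarrow> 1"
  shows "(\<lambda>l. measure (\<nu> l) (space (\<nu> l) - {x \<in> space (\<nu> l). enat (\<tau> l x) < hit T (A l) x}))
           \<longlonglongrightarrow> 0"
  using tendsto_diff[OF tendsto_const assms(5), of 1]
  by (simp add: prob_space.prob_compl[OF assms(1) sets_delay_before_hit[OF assms(2-4)]])

lemma admissible_delay_of_tendsto_in_prob:
  fixes P :: "nat \<Rightarrow> 'a \<Rightarrow> nat \<Rightarrow> enat"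
  assumes \<nu>: "\<And>l. prob_space (\<nu> l)" and T: "\<And>l. T \<in> measurable (\<nu> l) (\<nu> l)"
    and \<tau>: "\<And>l. \<tau> l \<in> measurable (\<nu> l) (count_space UNIV)"
    and chi_lipschitz: "\<And>j. seq_lipschitz (chi j)" and chi_bounded: "\<And>j s. \<bar>chi j s\<bar> \<le> 1"
    and P: "\<And>l j. (\<lambda>x. P l x j) \<in> measurable (\<nu> l) (count_space UNIV)"
    and in_prob: "\<And>j \<epsilon>. 0 < \<epsilon> \<Longrightarrow> (\<lambda>l. measure (\<nu> l) {x \<in> space (\<nu> l). \<epsilon> <
       \<bar>chi j (\<lambda>i. ennreal (a l) * ennreal_of_enat (P l x i))
        - chi j (\<lambda>i. ennreal (a l) * ennreal_of_enat (P l ((T ^^ \<tau> l x) x) i))\<bar>}) \<longlonglongrightarrow> 0"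
  shows "admissible_delay T chi (\<lambda>l x j. ennreal (a l) * ennreal_of_enat (P l x j)) \<nu> \<tau>"
  unfolding admissible_delay_def
proof (rule DE_tendsto_zero[OF \<nu> chi_bounded])
  fix l j
  note chi_comp = measurable_seq_lipschitz_comp[OF chi_lipschitz,
      where g="\<lambda>e. ennreal (a l) * ennreal_of_enat e"]
  show "(\<lambda>x. chi j (\<lambda>i. ennreal (a l) * ennreal_of_enat (P l x i))) \<in> borel_measurable (\<nu> l)"
    by (rule chi_comp[OF P])
  show "(\<lambda>x. chi j (\<lambda>i. ennreal (a l) * ennreal_of_enat (P l ((T ^^ \<tau> l x) x) i)))
          \<in> borel_measurable (\<nu> l)"
    by (rule chi_comp[OF measurable_compose[OF measurable_funpow_at[OF T \<tau>] P]])
qed (rule in_prob)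

lemma admissible_delay_return_process:
  assumes \<nu>: "\<And>l. prob_space (\<nu> l)" and T: "\<And>l. T \<in> measurable (\<nu> l) (\<nu> l)"
    and A: "\<And>l. A l \<in> sets (\<nu> l)" and \<tau>: "\<And>l. \<tau> l \<in> measurable (\<nu> l) (count_space UNIV)"
    and scale_nonneg: "\<And>l. 0 \<le> a l"
    and chi_lipschitz: "\<And>j. seq_lipschitz (chi j)" and chi_bounded: "\<And>j s. \<bar>chi j s\<bar> \<le> 1"
    and small: "\<And>e. 0 < e \<Longrightarrow>
      (\<lambda>l. measure (\<nu> l) {x \<in> space (\<nu> l). e < a l * real (\<tau> l x)}) \<longlonglongrightarrow> 0"
    and before: "(\<lambda>l. measure (\<nu> l) {x \<in> space (\<nu> l). enat (\<tau> l x) < hit T (A l) x}) \<longlonglongrightarrow> 1"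
  shows "admissible_delay T chi (\<lambda>l x j. ennreal (a l) * ennreal_of_enat (Phi T (A l) x j)) \<nu> \<tau>"
proof (rule admissible_delay_of_tendsto_in_prob[OF \<nu> T \<tau> chi_lipschitz chi_bounded])
  show "(\<lambda>x. Phi T (A l) x j) \<in> measurable (\<nu> l) (count_space UNIV)" for l j
    by (rule measurable_Phi[OF T A])
  fix j and \<epsilon> :: real
  assume "0 < \<epsilon>"
  obtain L where "0 \<le> L" and L: "\<And>s t. \<bar>chi j s - chi j t\<bar> \<le> L * seq_dist s t"
    using seq_lipschitzE[OF chi_lipschitz] by blast
  define e where "e = \<epsilon> / (L + 1)"
  have "0 < e" using \<open>0 < \<epsilon>\<close> \<open>0 \<le> L\<close> by (simp add: e_def)
  have "L * e \<le> \<epsilon>"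
    using \<open>0 < \<epsilon>\<close> \<open>0 \<le> L\<close> by (simp add: e_def field_simps)
  let ?R = "\<lambda>l y j. ennreal (a l) * ennreal_of_enat (Phi T (A l) y j)"
  have close: "\<bar>chi j (?R l x) - chi j (?R l ((T ^^ \<tau> l x) x))\<bar> \<le> \<epsilon>"
    if "enat (\<tau> l x) < hit T (A l) x" and "a l * real (\<tau> l x) \<le> e" for l x
  proof -
    have "\<bar>chi j (?R l x) - chi j (?R l ((T ^^ \<tau> l x) x))\<bar> \<le> L * (a l * real (\<tau> l x) / 2)"
      using order_trans[OF L mult_left_mono[OF seq_dist_scaled_Phi_funpow_le[OF scale_nonneg that(1)]]]
        \<open>0 \<le> L\<close> by simp
    also have "\<dots> \<le> L * e"
      using that(2) \<open>0 \<le> L\<close> \<open>0 < e\<close> by (intro mult_left_mono) simp_all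
    finally show ?thesis using \<open>L * e \<le> \<epsilon>\<close> by simp
  qed
  show "(\<lambda>l. measure (\<nu> l) {x \<in> space (\<nu> l). \<epsilon> < \<bar>chi j (?R l x) - chi j (?R l ((T ^^ \<tau> l x) x))\<bar>})
          \<longlonglongrightarrow> 0"
  proof (rule tendsto_measure_zero_if_subset_Un[OF _ _ _ _
        measure_delay_not_before_hit_tendsto_zero[OF \<nu> T A \<tau> before] small[OF \<open>0 < e\<close>]])
    show "{x \<in> space (\<nu> l). \<epsilon> < \<bar>chi j (?R l x) - chi j (?R l ((T ^^ \<tau> l x) x))\<bar>}
        \<subseteq> (space (\<nu> l) - {x \<in> space (\<nu> l). enat (\<tau> l x) < hit T (A l) x})
          \<union> {x \<in> space (\<nu> l). e < a l * real (\<tau> l x)}" for l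
      using close by force
    show "{x \<in> space (\<nu> l). e < a l * real (\<tau> l x)} \<in> sets (\<nu> l)" for l
      using pred_countable_rel[OF \<tau> \<tau>, of "\<lambda>k _. e < a l * real k" l] by (simp add: pred_def)
  qed (use \<nu> sets_delay_before_hit[OF T A \<tau>] in \<open>auto simp: prob_space_def\<close>)
qed

lemma admissible_delay_induced_return_process:
  assumes \<nu>: "\<And>l. prob_space (\<nu> l)" and T: "\<And>l. T \<in> measurable (\<nu> l) (\<nu> l)"
    and A: "\<And>l. A l \<in> sets (\<nu> l)" and \<tau>: "\<And>l. \<tau> l \<in> measurable (\<nu> l) (count_space UNIV)"
    and chi_lipschitz: "\<And>j. seq_lipschitz (chi j)" and chi_bounded: "\<And>j s. \<bar>chi j s\<bar> \<le> 1"
    and before: "(\<lambda>l. measure (\<nu> l) {x \<in> space (\<nu> l). enat (\<tau> l x) < hit T (A l) x}) \<longlonglongrightarrow> 1"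
  shows "admissible_delay T chi
           (\<lambda>l x j. ennreal (a l) * ennreal_of_enat (Phi T (A l) (retmap T (A l) x) j)) \<nu> \<tau>"
proof (rule admissible_delay_of_tendsto_in_prob[OF \<nu> T \<tau> chi_lipschitz chi_bounded])
  show "(\<lambda>x. Phi T (A l) (retmap T (A l) x) j) \<in> measurable (\<nu> l) (count_space UNIV)" for l j
    by (rule measurable_compose[OF measurable_retmap[OF T A] measurable_Phi[OF T A]])
  fix j and \<epsilon> :: real
  assume "0 < \<epsilon>"
  let ?R = "\<lambda>l y j. ennreal (a l) * ennreal_of_enat (Phi T (A l) (retmap T (A l) y) j)"
  show "(\<lambda>l. measure (\<nu> l) {x \<in> space (\<nu> l). \<epsilon> < \<bar>chi j (?R l x) - chi j (?R l ((T ^^ \<tau> l x) x))\<bar>})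
          \<longlonglongrightarrow> 0"
  proof (rule tendsto_measure_zero_if_subset_Un[where C="\<lambda>_. {}",
        OF _ _ _ _ measure_delay_not_before_hit_tendsto_zero[OF \<nu> T A \<tau> before]])
    show "{x \<in> space (\<nu> l). \<epsilon> < \<bar>chi j (?R l x) - chi j (?R l ((T ^^ \<tau> l x) x))\<bar>}
        \<subseteq> (space (\<nu> l) - {x \<in> space (\<nu> l). enat (\<tau> l x) < hit T (A l) x}) \<union> {}" for l
      using \<open>0 < \<epsilon>\<close> by (auto simp: Phi_retmap_funpow_before_hit)
  qed (use \<nu> sets_delay_before_hit[OF T A \<tau>] in \<open>auto simp: prob_space_def\<close>)
qed

theorem mainTheorem14:
  fixes M :: "'a measure" and T :: "'a \<Rightarrow> 'a" and A :: "nat \<Rightarrow> 'a set"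
    and \<nu> :: "nat \<Rightarrow> 'a measure" and \<tau> :: "nat \<Rightarrow> 'a \<Rightarrow> nat"
  assumes "prob_space M"
    and "measure_preserving_map M T"
    and "asymp_rare M A"
    and "\<forall>l. \<nu> l \<in> Pfrak M"
    and "\<forall>l. \<tau> l \<in> measurable M (count_space UNIV)"
  shows "(((\<forall>e>0. (\<lambda>l. measure (\<nu> l)
                {x \<in> space (\<nu> l). measure M (A l) * real (\<tau> l x) > e}) \<longlonglongrightarrow> 0)
          \<and> (\<lambda>l. measure (\<nu> l) {x \<in> space (\<nu> l). enat (\<tau> l x) < hit T (A l) x}) \<longlonglongrightarrow> 1)
         \<longrightarrow> (\<forall>chi. chi_system chi \<longrightarrow>
               admissible_delay T chi
                 (\<lambda>l x j. ennreal (measure M (A l)) * ennreal_of_enat (Phi T (A l) x j))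
                 \<nu> \<tau>))
       \<and> (((\<lambda>l. measure (\<nu> l) {x \<in> space (\<nu> l). enat (\<tau> l x) < hit T (A l) x}) \<longlonglongrightarrow> 1)
         \<longrightarrow> (\<forall>chi. chi_system chi \<longrightarrow>
               admissible_delay T chi
                 (\<lambda>l x j. ennreal (measure M (A l))
                           * ennreal_of_enat (Phi T (A l) (retmap T (A l) x) j))
                 \<nu> \<tau>))"
proof -
  have \<nu>: "\<And>l. prob_space (\<nu> l)" and sets_\<nu>: "\<And>l. sets (\<nu> l) = sets M"
    using assms(4) by (simp_all add: Pfrak_def)
  have T: "T \<in> measurable (\<nu> l) (\<nu> l)" for l
    using assms(2) by (simp add: measure_preserving_map_def measurable_cong_sets[OF sets_\<nu> sets_\<nu>])
  have A: "A l \<in> sets (\<nu> l)" for l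
    using assms(3) by (simp add: asymp_rare_def sets_\<nu>)
  have \<tau>: "\<tau> l \<in> measurable (\<nu> l) (count_space UNIV)" for l
    using assms(5) by (simp add: measurable_cong_sets[OF sets_\<nu> refl])
  have chi: "seq_lipschitz (chi j)" "\<bar>chi j s\<bar> \<le> 1" if "chi_system chi" for chi j s
    using that by (simp_all add: chi_system_def)
  show ?thesis
    by (auto intro!: admissible_delay_return_process[OF \<nu> T A \<tau> measure_nonneg chi]
      admissible_delay_induced_return_process[OF \<nu> T A \<tau> chi])
qed

end
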